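(* Let $C:=\sqrt{\frac{15+\sqrt{65}}{8}}$ and let $g:\mathbb{R}\to\mathbb{R}$ be $$g(z):=-\frac{2}{5}z^4+\frac{8}{5}Cz^3+\Big(\frac32-\frac{12}{5}C^2\Big)z^2+\Big(\frac85C^3-3C\Big)z+1 .$$ For $W=[w_1,w_2,w_3]$ with $w_1,w_2,w_3\in\mathbb{R}^3$ and $b=[b_1,b_2,b_3]\in\mathbb{R}^3$, define $f(\cdot;W):\mathbb{R}^3\to\mathbb{R}^3$ by $f(x;W):=[g(\langle w_1,x\rangle+b_1),g(\langle w_2,x\rangle+b_2),g(\langle w_3,x\rangle+b_3)]^\top$. Then there exist such $W$ and $b$ for which $f(\cdot;W)$ has two distinct fixed points $p_1,p_2\in\mathbb{R}^3$ such that for each $i\in\{1,2\}$ there exist constants $\epsilon_i>0$, $c_i>0$ and $K_i\in[0,1)$ with the following property: for every initial point $x^{(0)}\in\prod_{j=1}^3[p_{i,j}-\epsilon_i,p_{i,j}+\epsilon_i]$, the fixed-point iteration $x^{(t)}=f(x^{(t-1)};W)$ ($t\ge1$) converges to $p_i$, and for every $t\ge2$, $$\|x^{(t)}-p_i\|_\infty\le K_i^t\cdot c_i\epsilon_i .$$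
   Context: $p_{i,j}$ denotes the $j$-th coordinate of $p_i$; $\|\cdot\|_\infty$ is the $\ell_\infty$ norm. A fixed point of $F$ is a point $p$ with $F(p)=p$. *)

theory Defs
  imports "HOL-Analysis.Analysis"
begin

definition C_const :: real where
  "C_const = sqrt ((15 + sqrt 65) / 8)"

definition g_poly :: "real \<Rightarrow> real" where
  "g_poly z = - (2/5) * z ^ 4 + (8/5) * C_const * z ^ 3
              + (3/2 - (12/5) * C_const ^ 2) * z ^ 2
              + ((8/5) * C_const ^ 3 - 3 * C_const) * z + 1"

definition f_map :: "real^3^3 \<Rightarrow> real^3 \<Rightarrow> real^3 \<Rightarrow> real^3" where
  "f_map W b x = (\<chi> i. g_poly ((W $ i) \<bullet> x + b $ i))"

end

theory Submission
  imports Defs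
begin

(* Around C the activation is even: g (C + u) = g C + h u with h u = 3/2 u^2 - 2/5 u^4. With a
   single nonzero weight a (input 1 to neuron 1) and suitable biases, f sets coordinates 2 and 3 to
   g C and acts on coordinate 1 by u \<mapsto> g C + h (a (u - g C)). Both 0 and s = sqrt (15/8) are
   critical points of h, with h 0 = 0 and h s = 45/32, so for a = s / (45/32) this scalar map has
   two superattracting fixed points. Near each of them it halves the distance, hence f halves the
   maximum-norm distance to the corresponding fixed point of R^3 on a small box. *)

definition g_centered :: "real \<Rightarrow> real" where
  "g_centered u = 3/2 * u^2 - 2/5 * u^4"

lemma g_poly_shift: "g_poly (C_const + u) = g_poly C_const + g_centered u"
  unfolding g_poly_def g_centered_def
  by (simp add: field_simps power2_eq_square power3_eq_cube power4_eq_xxxx)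

lemma power2_le_mult_abs:
  fixes u :: real
  assumes "\<bar>u\<bar> \<le> r"
  shows "u^2 \<le> r * \<bar>u\<bar>"
proof -
  have "u^2 = \<bar>u\<bar> * \<bar>u\<bar>"
    by (simp add: power2_eq_square)
  also have "\<dots> \<le> r * \<bar>u\<bar>"
    using assms by (intro mult_right_mono) auto
  finally show ?thesis .
qed

lemma abs_g_centered_le:
  assumes "\<bar>u\<bar> \<le> 1/16"
  shows "\<bar>g_centered u\<bar> \<le> \<bar>u\<bar> / 2"
proof -
  have u2: "u^2 \<le> \<bar>u\<bar> / 16"
    using power2_le_mult_abs[OF assms] by simp
  then have "0 \<le> 3/2 - 2/5 * u^2"
    using assms by auto
  moreover have "g_centered u = u^2 * (3/2 - 2/5 * u^2)"
    by (simp add: g_centered_def algebra_simps power2_eq_square power4_eq_xxxx)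
  ultimately have "\<bar>g_centered u\<bar> = u^2 * (3/2 - 2/5 * u^2)"
    by simp
  also have "\<dots> \<le> u^2 * (3/2)"
    by (intro mult_left_mono) auto
  finally show ?thesis
    using u2 by linarith
qed

lemma abs_g_centered_critical_add_le:
  fixes s v :: real
  assumes s2: "s^2 = 15/8" and v: "\<bar>v\<bar> \<le> 1/16"
  shows "\<bar>g_centered (s + v) - g_centered s\<bar> \<le> \<bar>v\<bar> / 2"
proof -
  have "\<bar>s\<bar> \<le> 2"
    using abs_le_square_iff[of s 2] s2 by simp
  \<comment> \<open>s^2 = 15/8 makes s a critical point of g_centered: the linear term vanishes\<close>
  have diff: "g_centered (s + v) - g_centered s = -(v^2 * (3 + 8/5 * (s * v) + 2/5 * v^2))"
  proof -
    have "g_centered (s + v) - g_centered s = v * s * (3 - 8/5 * s^2)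
        - v^2 * (3 + 8/5 * (s * v) + 2/5 * v^2) + v^2 * (3/2 - 12/5 * s^2 + 3)"
      by (simp add: g_centered_def algebra_simps power2_eq_square power3_eq_cube power4_eq_xxxx)
    then show ?thesis
      unfolding s2 by simp
  qed
  have v2: "v^2 \<le> \<bar>v\<bar> / 16"
    using power2_le_mult_abs[OF v] by simp
  have "\<bar>s * v\<bar> \<le> 2 * (1/16)"
    unfolding abs_mult using \<open>\<bar>s\<bar> \<le> 2\<close> v by (intro mult_mono) auto
  moreover have "v^2 \<le> 1"
    using v2 v by linarith
  ultimately have "\<bar>3 + 8/5 * (s * v) + 2/5 * v^2\<bar> \<le> 4"
    using zero_le_power2[of v] unfolding abs_le_iff by linarith
  then have "\<bar>g_centered (s + v) - g_centered s\<bar> \<le> v^2 * 4"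
    unfolding diff abs_minus_cancel abs_mult abs_power2 by (intro mult_left_mono) auto
  with v2 show ?thesis
    by linarith
qed

lemma g_centered_critical_value:
  fixes s :: real
  assumes "s^2 = 15/8"
  shows "g_centered s = 45/32"
proof -
  have "g_centered s = 3/2 * s^2 - 2/5 * (s^2)^2"
    by (simp add: g_centered_def flip: power_mult)
  also have "\<dots> = 45/32"
    unfolding assms by (simp add: power2_eq_square)
  finally show ?thesis .
qed

definition weight :: real where
  "weight = 32/45 * sqrt (15/8)"

lemma weight_nonneg_le_one: "0 \<le> weight" "weight \<le> 1"
proof -
  have "sqrt (15/8) \<le> (45/32 :: real)"
    by (rule real_sqrt_le_iff'[THEN iffD2]) (simp_all add: power2_eq_square)
  then show "0 \<le> weight" "weight \<le> 1"
    by (simp_all add: weight_def)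
qed

lemma abs_weight_mult_le: "\<bar>weight * v\<bar> \<le> \<bar>v\<bar>"
  using weight_nonneg_le_one by (simp add: abs_mult mult_left_le_one_le)

lemma abs_g_centered_weight_le:
  assumes "\<bar>v\<bar> \<le> 1/16"
  shows "\<bar>g_centered (weight * v)\<bar> \<le> 1/2 * \<bar>v\<bar>"
  using abs_g_centered_le[of "weight * v"] abs_weight_mult_le[of v] assms by simp

lemma abs_g_centered_weight_sub_le:
  assumes "\<bar>v - 45/32\<bar> \<le> 1/16"
  shows "\<bar>g_centered (weight * v) - 45/32\<bar> \<le> 1/2 * \<bar>v - 45/32\<bar>"
proof -
  have s2: "sqrt (15/8) ^ 2 = (15/8 :: real)"
    by simp
  have "weight * v = sqrt (15/8) + weight * (v - 45/32)"
    by (simp add: weight_def field_simps)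
  then show ?thesis
    using abs_g_centered_critical_add_le[OF s2, of "weight * (v - 45/32)"]
      g_centered_critical_value[OF s2] abs_weight_mult_le[of "v - 45/32"] assms
    by simp
qed

lemma infnorm_le_iff_cart: "infnorm (x :: real^'n) \<le> r \<longleftrightarrow> (\<forall>i. \<bar>x $ i\<bar> \<le> r)"
proof
  assume "infnorm x \<le> r"
  then show "\<forall>i. \<bar>x $ i\<bar> \<le> r"
    using component_le_infnorm_cart order_trans by blast
next
  assume "\<forall>i. \<bar>x $ i\<bar> \<le> r"
  then show "infnorm x \<le> r"
    unfolding infnorm_cart by (intro cSup_least) auto
qed

lemma infnorm_iterates_le:
  fixes F :: "'a::euclidean_space \<Rightarrow> 'a"
  assumes K: "0 \<le> K" "K \<le> 1"
    and contracting: "\<And>x. infnorm (x - p) \<le> e \<Longrightarrow> infnorm (F x - p) \<le> K * infnorm (x - p)"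
    and x0: "infnorm (x0 - p) \<le> e"
  shows "infnorm ((F ^^ t) x0 - p) \<le> K ^ t * infnorm (x0 - p)"
proof (induction t)
  case 0
  show ?case by simp
next
  case (Suc t)
  have "K ^ t * infnorm (x0 - p) \<le> infnorm (x0 - p)"
    using K by (intro mult_left_le_one_le infnorm_pos_le power_le_one) auto
  then have "infnorm ((F ^^ t) x0 - p) \<le> e"
    using Suc.IH x0 by linarith
  then have "infnorm ((F ^^ Suc t) x0 - p) \<le> K * infnorm ((F ^^ t) x0 - p)"
    using contracting by simp
  also have "\<dots> \<le> K * (K ^ t * infnorm (x0 - p))"
    using Suc.IH K by (intro mult_left_mono)
  finally show ?case
    by simp
qed

lemma iterates_tendsto_if_infnorm_contracting:
  fixes F :: "'a::euclidean_space \<Rightarrow> 'a"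
  assumes K: "0 \<le> K" "K < 1"
    and contracting: "\<And>x. infnorm (x - p) \<le> e \<Longrightarrow> infnorm (F x - p) \<le> K * infnorm (x - p)"
    and x0: "infnorm (x0 - p) \<le> e"
  shows "(\<lambda>t. (F ^^ t) x0) \<longlonglongrightarrow> p"
proof -
  have "\<forall>t. norm ((F ^^ t) x0 - p) \<le> sqrt DIM('a) * (K ^ t * infnorm (x0 - p))"
  proof
    fix t
    have "norm ((F ^^ t) x0 - p) \<le> sqrt DIM('a) * infnorm ((F ^^ t) x0 - p)"
      by (rule norm_le_infnorm)
    also have "\<dots> \<le> sqrt DIM('a) * (K ^ t * infnorm (x0 - p))"
      using infnorm_iterates_le[OF K(1) less_imp_le[OF K(2)] contracting x0]
      by (intro mult_left_mono) auto
    finally show "norm ((F ^^ t) x0 - p) \<le> sqrt DIM('a) * (K ^ t * infnorm (x0 - p))" .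
  qed
  moreover have "(\<lambda>t. sqrt DIM('a) * (K ^ t * infnorm (x0 - p))) \<longlonglongrightarrow> 0"
    using K by (intro tendsto_mult_right_zero tendsto_mult_left_zero LIMSEQ_power_zero) simp
  ultimately have "(\<lambda>t. (F ^^ t) x0 - p) \<longlonglongrightarrow> 0"
    by (rule Lim_null_comparison[OF always_eventually])
  then show ?thesis
    using Lim_null by blast
qed

definition linearly_attracting :: "(real^'n \<Rightarrow> real^'n) \<Rightarrow> real^'n \<Rightarrow> bool" where
  "linearly_attracting F p \<longleftrightarrow> (\<exists>\<epsilon> c K. \<epsilon> > 0 \<and> c > 0 \<and> 0 \<le> K \<and> K < 1 \<and>
     (\<forall>x0. (\<forall>j. \<bar>x0 $ j - p $ j\<bar> \<le> \<epsilon>) \<longrightarrow>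
        (let x = (\<lambda>t. (F ^^ t) x0) in
           x \<longlonglongrightarrow> p \<and> (\<forall>t \<ge> 2. infnorm (x t - p) \<le> K ^ t * c * \<epsilon>))))"

lemma linearly_attracting_if_infnorm_contracting:
  fixes F :: "real^'n \<Rightarrow> real^'n"
  assumes e: "0 < e" and K: "0 \<le> K" "K < 1"
    and contracting: "\<And>x. infnorm (x - p) \<le> e \<Longrightarrow> infnorm (F x - p) \<le> K * infnorm (x - p)"
  shows "linearly_attracting F p"
  unfolding linearly_attracting_def Let_def
proof (rule exI[of _ e], rule exI[of _ 1], rule exI[of _ K], intro conjI allI impI)
  fix x0 :: "real^'n"
  assume "\<forall>j. \<bar>x0 $ j - p $ j\<bar> \<le> e"
  then have x0: "infnorm (x0 - p) \<le> e"
    by (simp add: infnorm_le_iff_cart)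
  show "(\<lambda>t. (F ^^ t) x0) \<longlonglongrightarrow> p"
    using iterates_tendsto_if_infnorm_contracting[OF K contracting x0] .
  fix t :: nat
  have "infnorm ((F ^^ t) x0 - p) \<le> K ^ t * infnorm (x0 - p)"
    by (rule infnorm_iterates_le[OF K(1) less_imp_le[OF K(2)] contracting x0])
  also have "\<dots> \<le> K ^ t * 1 * e"
    using K x0 by (simp add: mult_left_mono)
  finally show "infnorm ((F ^^ t) x0 - p) \<le> K ^ t * 1 * e" .
qed (use e K in auto)

lemma linearly_attracting_single_coordinate:
  fixes \<phi> :: "real \<Rightarrow> real" and k :: "'n::finite"
  assumes e: "0 < e" and K: "0 \<le> K" "K < 1"
    and contracting: "\<And>u. \<bar>u - z\<bar> \<le> e \<Longrightarrow> \<bar>\<phi> u - z\<bar> \<le> K * \<bar>u - z\<bar>"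
  shows "linearly_attracting (\<lambda>x. \<chi> i. if i = k then \<phi> (x $ k) else y) (\<chi> i. if i = k then z else y)"
proof (rule linearly_attracting_if_infnorm_contracting[OF e K])
  fix x :: "real^'n"
  let ?p = "\<chi> i. if i = k then z else y"
  assume x: "infnorm (x - ?p) \<le> e"
  have xk: "\<bar>x $ k - z\<bar> \<le> infnorm (x - ?p)"
    using component_le_infnorm_cart[of "x - ?p" k] by simp
  have "\<bar>\<phi> (x $ k) - z\<bar> \<le> K * \<bar>x $ k - z\<bar>"
    using contracting xk x by simp
  also have "\<dots> \<le> K * infnorm (x - ?p)"
    using xk K(1) by (rule mult_left_mono)
  finally have "\<bar>\<phi> (x $ k) - z\<bar> \<le> K * infnorm (x - ?p)" .
  then show "infnorm ((\<chi> i. if i = k then \<phi> (x $ k) else y) - ?p) \<le> K * infnorm (x - ?p)"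
    unfolding infnorm_le_iff_cart using K(1) by (simp add: infnorm_pos_le)
qed

lemma f_map_single_weight:
  "f_map (\<chi> i j. if i = 1 \<and> j = 1 then a else 0) (\<chi> i. if i = 1 then C_const + c else C_const) x
     = (\<chi> i. if i = 1 then g_poly C_const + g_centered (a * x $ 1 + c) else g_poly C_const)"
proof -
  have "(\<chi> j. if i = 1 \<and> j = 1 then a else 0) \<bullet> x = (if i = 1 then a * x $ 1 else 0)" for i :: 3
    by (cases "i = 1") (simp_all add: inner_vec_def if_distrib[of "\<lambda>t. t * _"] cong: if_cong)
  then show ?thesis
    unfolding f_map_def by (auto simp: vec_eq_iff g_poly_shift[symmetric] ac_simps)
qed

theorem lemmaB5:
  shows "\<exists>(W :: real^3^3) (b :: real^3) (p1 :: real^3) (p2 :: real^3).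
     f_map W b p1 = p1 \<and> f_map W b p2 = p2 \<and> p1 \<noteq> p2 \<and>
     (\<forall>p \<in> {p1, p2}. \<exists>\<epsilon> c K. \<epsilon> > 0 \<and> c > 0 \<and> 0 \<le> K \<and> K < 1 \<and>
        (\<forall>x0 :: real^3. (\<forall>j. \<bar>x0 $ j - p $ j\<bar> \<le> \<epsilon>) \<longrightarrow>
           (let x = (\<lambda>t. (f_map W b ^^ t) x0) in
              x \<longlonglongrightarrow> p \<and>
              (\<forall>t \<ge> 2. infnorm (x t - p) \<le> K ^ t * c * \<epsilon>))))"
proof -
  define y where "y = g_poly C_const"
  define W :: "real^3^3" where "W = (\<chi> i j. if i = 1 \<and> j = 1 then weight else 0)"
  define b :: "real^3" where "b = (\<chi> i. if i = 1 then C_const + - (weight * y) else C_const)"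
  define \<phi> where "\<phi> u = y + g_centered (weight * (u - y))" for u
  define p :: "real \<Rightarrow> real^3" where "p z = (\<chi> i. if i = 1 then z else y)" for z
  have F: "f_map W b = (\<lambda>x. \<chi> i. if i = 1 then \<phi> (x $ 1) else y)"
    unfolding W_def b_def f_map_single_weight \<phi>_def y_def
    by (simp add: algebra_simps cong: if_cong)
  have \<phi>1: "\<bar>\<phi> u - y\<bar> \<le> 1/2 * \<bar>u - y\<bar>" if "\<bar>u - y\<bar> \<le> 1/16" for u
    using abs_g_centered_weight_le[OF that] by (simp add: \<phi>_def)
  have \<phi>2: "\<bar>\<phi> u - (y + 45/32)\<bar> \<le> 1/2 * \<bar>u - (y + 45/32)\<bar>"
    if "\<bar>u - (y + 45/32)\<bar> \<le> 1/16" for u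
    using abs_g_centered_weight_sub_le[of "u - y"] that by (simp add: \<phi>_def algebra_simps)
  \<comment> \<open>at distance 0 the contraction estimates say that y and y + 45/32 are fixed by \<phi>\<close>
  have "f_map W b (p y) = p y" "f_map W b (p (y + 45/32)) = p (y + 45/32)"
    using \<phi>1[of y] \<phi>2[of "y + 45/32"] by (simp_all add: F p_def vec_eq_iff)
  moreover have "p y \<noteq> p (y + 45/32)"
    by (simp add: p_def vec_eq_iff exI[of _ 1])
  moreover have "linearly_attracting (f_map W b) (p y)"
    unfolding F p_def
    by (rule linearly_attracting_single_coordinate[where e="1/16" and K="1/2", OF _ _ _ \<phi>1]) simp_all
  moreover have "linearly_attracting (f_map W b) (p (y + 45/32))"
    unfolding F p_def
    by (rule linearly_attracting_single_coordinate[where e="1/16" and K="1/2", OF _ _ _ \<phi>2]) simp_all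
  ultimately show ?thesis
    unfolding linearly_attracting_def by blast
qed

end
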